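(* Every finite forest satisfies the bunkbed conjecture: for every forest $T$, every symmetric weight $\mu$ on $BB(T)$, and all $x,y\in V(T)$, $\mathbb P_{BB(T),\mu}(x^-\sim y^-)\ge \mathbb P_{BB(T),\mu}(x^-\sim y^+)$.
   Context: For a graph $G$, a weight is a function $\mu\colon E(G)\to[0,1]$; the associated edge-percolation probability space has sample space $\mathscr P(E(G))$, with $\mathbb P_{G,\mu}(X)=\prod_{e\in X}\mu(e)\prod_{e\notin X}(1-\mu(e))$ for $X\subseteq E(G)$, i.e. each edge $e$ is independently open with probability $\mu(e)$. For vertices $x,y$, $(x\sim y)$ is the event that $x$ and $y$ are joined by a path of open edges. The bunkbed graph $BB(G)=G\,\Box\,K_2$ has vertex set $V(G)\times\{0,1\}$, writing $x^-=(x,0)$, $x^+=(x,1)$, with edges $x^-y^-$ and $x^+y^+$ for every $xy\in E(G)$ and vertical edges $x^-x^+$ for every $x\in V(G)$. A weight $\mu$ on $BB(G)$ is symmetric if $\mu(x^-y^-)=\mu(x^+y^+)$ for every $xy\in E(G)$. *)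

theory Defs
  imports Complex_Main
begin

definition simple_graph :: "'a set \<Rightarrow> 'a set set \<Rightarrow> bool" where
  "simple_graph V E \<longleftrightarrow> finite V \<and> (\<forall>e\<in>E. \<exists>u v. u \<in> V \<and> v \<in> V \<and> u \<noteq> v \<and> e = {u, v})"

definition is_cycle :: "'a set \<Rightarrow> 'a set set \<Rightarrow> 'a list \<Rightarrow> bool" where
  "is_cycle V E vs \<longleftrightarrow> length vs \<ge> 3 \<and> distinct vs \<and> set vs \<subseteq> V \<and>
     (\<forall>i < length vs. {vs ! i, vs ! ((i + 1) mod length vs)} \<in> E)"

definition forest :: "'a set \<Rightarrow> 'a set set \<Rightarrow> bool" where
  "forest V E \<longleftrightarrow> simple_graph V E \<and> (\<nexists>vs. is_cycle V E vs)"

text \<open>Bunkbed graph: x^- = (x, False), x^+ = (x, True).\<close>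

definition bb_vertices :: "'a set \<Rightarrow> ('a \<times> bool) set" where
  "bb_vertices V = V \<times> UNIV"

definition bb_edges :: "'a set \<Rightarrow> 'a set set \<Rightarrow> ('a \<times> bool) set set" where
  "bb_edges V E =
     {{(x, False), (y, False)} | x y. {x, y} \<in> E} \<union>
     {{(x, True), (y, True)} | x y. {x, y} \<in> E} \<union>
     {{(x, False), (x, True)} | x. x \<in> V}"

definition weight :: "'v set set \<Rightarrow> ('v set \<Rightarrow> real) \<Rightarrow> bool" where
  "weight E \<mu> \<longleftrightarrow> (\<forall>e\<in>E. 0 \<le> \<mu> e \<and> \<mu> e \<le> 1)"

definition symmetric_bb_weight :: "'a set set \<Rightarrow> (('a \<times> bool) set \<Rightarrow> real) \<Rightarrow> bool" where
  "symmetric_bb_weight E \<mu> \<longleftrightarrow>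
     (\<forall>x y. {x, y} \<in> E \<longrightarrow> \<mu> {(x, False), (y, False)} = \<mu> {(x, True), (y, True)})"

definition joined :: "'v set set \<Rightarrow> 'v \<Rightarrow> 'v \<Rightarrow> bool" where
  "joined X u v \<longleftrightarrow> (u, v) \<in> {(a, b). {a, b} \<in> X}\<^sup>*"

definition perc_prob :: "'v set set \<Rightarrow> ('v set \<Rightarrow> real) \<Rightarrow> ('v set set \<Rightarrow> bool) \<Rightarrow> real" where
  "perc_prob E \<mu> A =
     (\<Sum>X\<in>{X. X \<subseteq> E \<and> A X}. (\<Prod>e\<in>X. \<mu> e) * (\<Prod>e\<in>E - X. 1 - \<mu> e))"

end

theory Submission
  imports Defs
begin

text \<open>Fix a path x = p_0, ..., p_k = y in the forest. For i < k, deleting the edge p_i p_{i+1}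
  separates y from x; call the component of y the far side of i (the far side of k is empty).
  Call i a switch of a configuration if p_i^- and p_i^+ are joined by open edges none of which
  lies over the far side of i. Exchanging the two levels of every edge over the far side of a
  switch preserves the weight, by symmetry, and preserves the set of switches, so flipping at a
  switch chosen from that set is a weight-preserving involution. If x^- is joined to y^+, a
  switch exists, and after the flip x^- is joined to y^-: the part of the connection over the
  far side changes level, and the switch repairs the level change at the boundary.\<close>

lemma joined_refl [simp]: "joined X u u"
  by (simp add: joined_def)

lemma joined_edge: "{a, b} \<in> X \<Longrightarrow> joined X a b"
  by (auto simp: joined_def)

lemma joined_trans: "joined X a b \<Longrightarrow> joined X b c \<Longrightarrow> joined X a c"
  unfolding joined_def by (rule rtrancl_trans)

lemma joined_sym: "joined X a b \<Longrightarrow> joined X b a"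
proof -
  have "sym {(a, b). {a, b} \<in> X}"
    by (auto intro: symI simp: insert_commute)
  then show "joined X a b \<Longrightarrow> joined X b a"
    unfolding joined_def by (blast dest: sym_rtrancl symD)
qed

lemma joined_mono: "X \<subseteq> Y \<Longrightarrow> joined X a b \<Longrightarrow> joined Y a b"
  unfolding joined_def by (erule rtrancl_mono[THEN subsetD, rotated]) auto

lemma joined_map:
  assumes "\<And>a b. {a, b} \<in> X \<Longrightarrow> joined Y (h a) (h b)" and "joined X u v"
  shows "joined Y (h u) (h v)"
proof -
  have "(u, v) \<in> {(a, b). {a, b} \<in> X}\<^sup>*"
    using assms(2) by (simp add: joined_def)
  then show ?thesis
    by (induction rule: rtrancl_induct) (auto intro: assms(1) joined_trans)
qed

lemma joined_exit:
  assumes "joined X u v" "u \<in> A" "v \<notin> A"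
  obtains a b where "{a, b} \<in> X" "a \<in> A" "b \<notin> A" "joined {e \<in> X. e \<subseteq> A} u a"
proof -
  have "(u, v) \<in> {(a, b). {a, b} \<in> X}\<^sup>*"
    using assms(1) by (simp add: joined_def)
  then have "\<exists>a b. {a, b} \<in> X \<and> a \<in> A \<and> b \<notin> A \<and> joined {e \<in> X. e \<subseteq> A} u a"
    using assms(2)
  proof (induction rule: converse_rtrancl_induct)
    case base
    then show ?case using assms(3) by simp
  next
    case (step w z)
    show ?case
    proof (cases "z \<in> A")
      case True
      then have "joined {e \<in> X. e \<subseteq> A} w z"
        using step by (intro joined_edge) auto
      then show ?thesis
        using step True by (blast intro: joined_trans)
    next
      case False
      then show ?thesis using step by fastforce
    qed
  qed
  then show ?thesis using that by blast
qed

lemma rtrancl_imp_distinct_path: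
  assumes "(a, b) \<in> R\<^sup>*"
  obtains ps where "ps \<noteq> []" "hd ps = a" "last ps = b" "distinct ps"
    "successively (\<lambda>u v. (u, v) \<in> R) ps"
proof -
  from assms have "\<exists>ps. ps \<noteq> [] \<and> hd ps = a \<and> last ps = b \<and> distinct ps \<and>
      successively (\<lambda>u v. (u, v) \<in> R) ps"
  proof (induction rule: converse_rtrancl_induct)
    case base
    show ?case by (intro exI[of _ "[b]"]) simp
  next
    case (step w z)
    then obtain ps where ps: "ps \<noteq> []" "hd ps = z" "last ps = b" "distinct ps"
      "successively (\<lambda>u v. (u, v) \<in> R) ps" by blast
    show ?case
    proof (cases "w \<in> set ps")
      case True
      then obtain us vs where "ps = us @ w # vs" by (meson split_list)
      with ps show ?thesis
        by (intro exI[of _ "w # vs"]) (auto simp: successively_append_iff)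
    next
      case False
      with ps step(1) show ?thesis
        by (intro exI[of _ "w # ps"]) (auto simp: successively_Cons)
    qed
  qed
  then show ?thesis using that by blast
qed

lemma simple_graph_edge_vertices: "simple_graph V E \<Longrightarrow> {u, v} \<in> E \<Longrightarrow> u \<in> V \<and> v \<in> V"
  unfolding simple_graph_def by (metis doubleton_eq_iff)

lemma forest_edge_is_bridge:
  assumes F: "forest V E" and ab: "{a, b} \<in> E" "a \<noteq> b"
  shows "\<not> joined (E - {{a, b}}) a b"
proof
  assume "joined (E - {{a, b}}) a b"
  then obtain ps where ps: "ps \<noteq> []" "hd ps = a" "last ps = b" "distinct ps"
    and steps: "successively (\<lambda>u v. {u, v} \<in> E - {{a, b}}) ps"
    unfolding joined_def by (auto elim: rtrancl_imp_distinct_path)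
  have step: "{ps ! i, ps ! Suc i} \<in> E - {{a, b}}" if "Suc i < length ps" for i
    using successively_nth[OF steps that] .
  have first: "ps ! 0 = a" and final: "ps ! (length ps - 1) = b"
    using ps by (simp_all add: hd_conv_nth last_conv_nth)
  have "length ps \<noteq> 1" "length ps \<noteq> 2"
    using first final ab(2) step[of 0] by (auto simp: numeral_2_eq_2)
  with ps(1) have len: "length ps \<ge> 3" by (cases "length ps") auto
  \<comment> \<open>The path avoids the edge {a, b}, which closes it into a cycle.\<close>
  have closed: "{ps ! i, ps ! ((i + 1) mod length ps)} \<in> E" if "i < length ps" for i
  proof (cases "Suc i < length ps")
    case True
    then show ?thesis using step by simp
  next
    case False
    with that have "Suc i = length ps" by simp
    then have "i = length ps - 1" "(i + 1) mod length ps = 0" by auto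
    then show ?thesis using first final ab(1) by (simp add: insert_commute)
  qed
  have "set ps \<subseteq> V"
    using F closed simple_graph_edge_vertices
    by (fastforce simp: forest_def in_set_conv_nth)
  with len ps(4) closed have "is_cycle V E ps" by (simp add: is_cycle_def)
  with F show False by (auto simp: forest_def)
qed

definition config_weight :: "'v set set \<Rightarrow> ('v set \<Rightarrow> real) \<Rightarrow> 'v set set \<Rightarrow> real" where
  "config_weight BE \<mu> X = (\<Prod>e\<in>X. \<mu> e) * (\<Prod>e\<in>BE - X. 1 - \<mu> e)"

lemma perc_prob_eq_sum_config_weight:
  "perc_prob BE \<mu> A = (\<Sum>X\<in>{X. X \<subseteq> BE \<and> A X}. config_weight BE \<mu> X)"
  by (simp add: perc_prob_def config_weight_def)

lemma config_weight_nonneg: "weight BE \<mu> \<Longrightarrow> X \<subseteq> BE \<Longrightarrow> 0 \<le> config_weight BE \<mu> X"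
  unfolding config_weight_def weight_def by (intro mult_nonneg_nonneg prod_nonneg) auto

lemma config_weight_image:
  assumes g: "bij_betw g BE BE" and \<mu>: "\<And>e. e \<in> BE \<Longrightarrow> \<mu> (g e) = \<mu> e" and X: "X \<subseteq> BE"
  shows "config_weight BE \<mu> (g ` X) = config_weight BE \<mu> X"
proof -
  have inj: "inj_on g BE" and onto: "g ` BE = BE"
    using g by (auto simp: bij_betw_def)
  have "BE - g ` X = g ` (BE - X)"
    using inj_on_image_set_diff[OF inj, of BE X] X onto by auto
  moreover have "inj_on g X" "inj_on g (BE - X)"
    using inj X by (auto intro: inj_on_subset)
  moreover have "(\<Prod>e\<in>Y. \<mu> (g e)) = (\<Prod>e\<in>Y. \<mu> e)" "(\<Prod>e\<in>Y. 1 - \<mu> (g e)) = (\<Prod>e\<in>Y. 1 - \<mu> e)"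
    if "Y \<subseteq> BE" for Y
    using that \<mu> by (auto intro!: prod.cong)
  ultimately show ?thesis
    using X by (simp add: config_weight_def prod.reindex)
qed

lemma perc_prob_le_by_involution:
  assumes "finite BE" "weight BE \<mu>"
    and maps: "\<And>X. X \<subseteq> BE \<Longrightarrow> \<phi> X \<subseteq> BE"
    and invol: "\<And>X. X \<subseteq> BE \<Longrightarrow> \<phi> (\<phi> X) = X"
    and preserves: "\<And>X. X \<subseteq> BE \<Longrightarrow> config_weight BE \<mu> (\<phi> X) = config_weight BE \<mu> X"
    and BA: "\<And>X. X \<subseteq> BE \<Longrightarrow> B X \<Longrightarrow> A (\<phi> X)"
  shows "perc_prob BE \<mu> B \<le> perc_prob BE \<mu> A"
proof -
  let ?B = "{X. X \<subseteq> BE \<and> B X}" and ?A = "{X. X \<subseteq> BE \<and> A X}"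
  have "inj_on \<phi> ?B"
    by (rule inj_onI) (metis (no_types, lifting) invol mem_Collect_eq)
  then have "(\<Sum>X\<in>?B. config_weight BE \<mu> X) = (\<Sum>X\<in>\<phi> ` ?B. config_weight BE \<mu> X)"
    by (simp add: sum.reindex preserves)
  also have "\<dots> \<le> (\<Sum>X\<in>?A. config_weight BE \<mu> X)"
  proof (rule sum_mono2)
    show "finite ?A" using \<open>finite BE\<close> by (auto intro: finite_subset[of _ "Pow BE"])
    show "\<phi> ` ?B \<subseteq> ?A" using maps BA by auto
  qed (use \<open>weight BE \<mu>\<close> config_weight_nonneg in auto)
  finally show ?thesis by (simp add: perc_prob_eq_sum_config_weight)
qed

lemma bb_edges_finite:
  assumes "simple_graph V E" shows "finite (bb_edges V E)"
proof (rule finite_subset)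
  show "bb_edges V E \<subseteq> Pow (V \<times> UNIV)"
    using simple_graph_edge_vertices[OF assms] by (auto simp: bb_edges_def)
  show "finite (Pow (V \<times> (UNIV :: bool set)))"
    using assms by (simp add: simple_graph_def)
qed

lemma bb_edge_cases:
  "{a, b} \<in> bb_edges V E \<Longrightarrow> fst a = fst b \<or> ({fst a, fst b} \<in> E \<and> snd a = snd b)"
  unfolding bb_edges_def by (auto simp: doubleton_eq_iff insert_commute)

lemma joined_bb_imp_joined:
  assumes "X \<subseteq> bb_edges V E" "joined X u v"
  shows "joined E (fst u) (fst v)"
proof (rule joined_map[OF _ assms(2)])
  fix a b assume "{a, b} \<in> X"
  with assms(1) show "joined E (fst a) (fst b)"
    by (metis bb_edge_cases joined_edge joined_refl subsetD)
qed

lemma bb_edges_flip_level: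
  "e \<in> bb_edges V E \<Longrightarrow> apsnd Not ` e \<in> bb_edges V E"
  unfolding bb_edges_def by (auto simp: insert_commute)

lemma symmetric_bb_weight_flip_level:
  "symmetric_bb_weight E \<mu> \<Longrightarrow> e \<in> bb_edges V E \<Longrightarrow> \<mu> (apsnd Not ` e) = \<mu> e"
  unfolding bb_edges_def symmetric_bb_weight_def by (auto simp: insert_commute)

lemma apsnd_Not_Not [simp]: "apsnd Not (apsnd Not q) = q"
  by (cases q) simp

definition touches :: "'a set \<Rightarrow> ('a \<times> bool) set \<Rightarrow> bool" where
  "touches W e \<longleftrightarrow> (\<exists>q\<in>e. fst q \<in> W)"

definition flip_over :: "'a set \<Rightarrow> 'a \<times> bool \<Rightarrow> 'a \<times> bool" where
  "flip_over W q = (if fst q \<in> W then apsnd Not q else q)"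

text \<open>An edge with one endpoint over W is flipped as a whole, so on such edges
  flip_edge_over W differs from the image under flip_over W.\<close>

definition flip_edge_over :: "'a set \<Rightarrow> ('a \<times> bool) set \<Rightarrow> ('a \<times> bool) set" where
  "flip_edge_over W e = (if touches W e then apsnd Not ` e else e)"

lemma touches_flip_level [simp]: "touches W (apsnd Not ` e) = touches W e"
  by (auto simp: touches_def)

lemma touches_flip_edge_over [simp]: "touches W' (flip_edge_over W e) = touches W' e"
  by (simp add: flip_edge_over_def)

lemma flip_edge_over_flip_edge_over [simp]: "flip_edge_over W (flip_edge_over W e) = e"
  by (simp add: flip_edge_over_def image_image)

lemma flip_edge_over_bb_edges:
  "e \<in> bb_edges V E \<Longrightarrow> flip_edge_over W e \<in> bb_edges V E"
  by (simp add: flip_edge_over_def bb_edges_flip_level)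

lemma bij_betw_flip_edge_over: "bij_betw (flip_edge_over W) (bb_edges V E) (bb_edges V E)"
  by (rule bij_betw_byWitness[where f' = "flip_edge_over W"]) (auto simp: flip_edge_over_bb_edges)

lemma symmetric_bb_weight_flip_edge_over:
  "symmetric_bb_weight E \<mu> \<Longrightarrow> e \<in> bb_edges V E \<Longrightarrow> \<mu> (flip_edge_over W e) = \<mu> e"
  by (simp add: flip_edge_over_def symmetric_bb_weight_flip_level)

locale bunkbed_forest_path =
  fixes V :: "'a set" and E :: "'a set set" and \<mu> :: "('a \<times> bool) set \<Rightarrow> real"
    and x y :: 'a and p :: "'a list" and k :: nat
  assumes forest: "forest V E"
    and weight: "weight (bb_edges V E) \<mu>"
    and symmetric: "symmetric_bb_weight E \<mu>"
    and end_in_V: "y \<in> V"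
    and length_path: "length p = Suc k"
    and path_start: "p ! 0 = x" and path_end: "p ! k = y"
    and distinct_path: "distinct p"
    and path_edge_in_E: "\<And>i. i < k \<Longrightarrow> {p ! i, p ! Suc i} \<in> E"
begin

abbreviation BE :: "('a \<times> bool) set set" where
  "BE \<equiv> bb_edges V E"

definition path_edge :: "nat \<Rightarrow> 'a set" where
  "path_edge i = {p ! i, p ! Suc i}"

definition far_side :: "nat \<Rightarrow> 'a set" where
  "far_side i = (if i < k then {v \<in> V. joined (E - {path_edge i}) v y} else {})"

definition avoiding :: "nat \<Rightarrow> ('a \<times> bool) set set" where
  "avoiding i = {e. \<not> touches (far_side i) e}"

definition switch :: "nat \<Rightarrow> ('a \<times> bool) set set \<Rightarrow> bool" where
  "switch i X \<longleftrightarrow> joined (X \<inter> avoiding i) (p ! i, False) (p ! i, True)"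

definition switches :: "('a \<times> bool) set set \<Rightarrow> nat set" where
  "switches X = {i. i \<le> k \<and> switch i X}"

definition flip_far :: "nat \<Rightarrow> ('a \<times> bool) set set \<Rightarrow> ('a \<times> bool) set set" where
  "flip_far i X = flip_edge_over (far_side i) ` X"

text \<open>The choice of switch is arbitrary; it only has to depend on the set of switches,
  which flip_far leaves unchanged.\<close>

definition bunkbed_flip :: "('a \<times> bool) set set \<Rightarrow> ('a \<times> bool) set set" where
  "bunkbed_flip X = (if switches X = {} then X else flip_far (SOME i. i \<in> switches X) X)"

lemma simple_graph: "simple_graph V E"
  using forest by (simp add: forest_def)

lemma path_vertex_in_V: "i \<le> k \<Longrightarrow> p ! i \<in> V"
proof (cases "i < k")
  case True
  then show ?thesis using path_edge_in_E simple_graph_edge_vertices[OF simple_graph] by blast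
qed (use path_end end_in_V in auto)

lemma path_vertex_eq_iff: "i \<le> k \<Longrightarrow> j \<le> k \<Longrightarrow> p ! i = p ! j \<longleftrightarrow> i = j"
  using distinct_path length_path by (simp add: nth_eq_iff_index_eq)

lemma path_edge_inj: "i < k \<Longrightarrow> j < k \<Longrightarrow> path_edge i = path_edge j \<Longrightarrow> i = j"
  by (auto simp: path_edge_def doubleton_eq_iff path_vertex_eq_iff)

lemma joined_along_path:
  assumes "a \<le> b" "b \<le> k" "i < a \<or> b \<le> i" "i < k"
  shows "joined (E - {path_edge i}) (p ! a) (p ! b)"
  using assms
proof (induction b)
  case (Suc b)
  show ?case
  proof (cases "a = Suc b")
    case False
    with Suc have "joined (E - {path_edge i}) (p ! a) (p ! b)" by auto
    moreover have "path_edge b \<noteq> path_edge i" "path_edge b \<in> E"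
      using Suc False path_edge_inj[of b i] path_edge_in_E[of b] by (auto simp: path_edge_def)
    then have "joined (E - {path_edge i}) (p ! b) (p ! Suc b)"
      by (intro joined_edge) (simp add: path_edge_def)
    ultimately show ?thesis by (rule joined_trans)
  qed simp
qed simp

lemma path_edge_is_bridge: "i < k \<Longrightarrow> \<not> joined (E - {path_edge i}) (p ! i) (p ! Suc i)"
  using forest_edge_is_bridge[OF forest path_edge_in_E] path_vertex_eq_iff[of i "Suc i"]
  by (simp add: path_edge_def)

lemma in_far_side_iff: "i < k \<Longrightarrow> v \<in> far_side i \<longleftrightarrow> v \<in> V \<and> joined (E - {path_edge i}) v y"
  by (simp add: far_side_def)

lemma far_side_empty_if: "\<not> i < k \<Longrightarrow> far_side i = {}"
  by (simp add: far_side_def)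

lemma path_vertex_notin_far_side: "j \<le> i \<Longrightarrow> p ! j \<notin> far_side i"
proof
  assume ji: "j \<le> i" and "p ! j \<in> far_side i"
  then have ik: "i < k" and "joined (E - {path_edge i}) (p ! j) y"
    using far_side_empty_if in_far_side_iff by blast+
  moreover have "joined (E - {path_edge i}) (p ! j) (p ! i)"
    "joined (E - {path_edge i}) (p ! Suc i) (p ! k)"
    using ji ik by (auto intro: joined_along_path joined_sym)
  ultimately have "joined (E - {path_edge i}) (p ! i) (p ! Suc i)"
    using path_end by (meson joined_sym joined_trans)
  with path_edge_is_bridge ik show False by blast
qed

lemma start_notin_far_side: "x \<notin> far_side i"
  using path_vertex_notin_far_side[of 0 i] path_start by simp

lemma path_vertex_in_far_side: "i < j \<Longrightarrow> j \<le> k \<Longrightarrow> p ! j \<in> far_side i"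
  using joined_along_path[of j k i] path_vertex_in_V[of j] path_end
  by (simp add: in_far_side_iff)

lemma end_in_far_side: "i < k \<Longrightarrow> y \<in> far_side i"
  using path_vertex_in_far_side[of i k] path_end by simp

lemma far_side_boundary_edge:
  assumes "{u, v} \<in> E" "u \<notin> far_side i" "v \<in> far_side i"
  shows "i < k \<and> u = p ! i \<and> v = p ! Suc i"
proof -
  have ik: "i < k" using assms(3) far_side_empty_if by blast
  have "{u, v} = path_edge i"
  proof (rule ccontr)
    assume "{u, v} \<noteq> path_edge i"
    with assms(1) have "joined (E - {path_edge i}) u v" by (intro joined_edge) simp
    moreover have "joined (E - {path_edge i}) v y"
      using assms(3) ik by (simp add: in_far_side_iff)
    moreover have "u \<in> V"
      using simple_graph_edge_vertices[OF simple_graph assms(1)] by simp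
    ultimately have "u \<in> far_side i"
      using ik by (simp add: in_far_side_iff joined_trans)
    with assms(2) show False by simp
  qed
  moreover have "u \<noteq> p ! Suc i" using assms(2) path_vertex_in_far_side[of i "Suc i"] ik by auto
  ultimately show ?thesis using ik by (auto simp: path_edge_def doubleton_eq_iff)
qed

lemma far_side_boundary_bb_edge:
  assumes "{a, b} \<in> BE" "fst a \<notin> far_side i" "fst b \<in> far_side i"
  obtains s where "i < k" "a = (p ! i, s)" "b = (p ! Suc i, s)"
proof -
  have "fst a \<noteq> fst b" using assms(2,3) by auto
  then have "{fst a, fst b} \<in> E" "snd a = snd b"
    using bb_edge_cases[OF assms(1)] by auto
  then have "i < k" "fst a = p ! i" "fst b = p ! Suc i" "snd a = snd b"
    using far_side_boundary_edge[of "fst a" "fst b" i] assms(2,3) by auto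
  then show ?thesis using that[of "snd a"] by (cases a, cases b) simp
qed

lemma far_side_antimono:
  assumes "j \<le> i" "i \<le> k" shows "far_side i \<subseteq> far_side j"
proof
  fix v assume v: "v \<in> far_side i"
  then have ik: "i < k" using far_side_empty_if by blast
  with assms(1) have jk: "j < k" by simp
  from v ik have vy: "joined (E - {path_edge i}) v y" by (simp add: in_far_side_iff)
  show "v \<in> far_side j"
  proof (rule ccontr)
    assume "v \<notin> far_side j"
    then obtain a b where ab: "{a, b} \<in> E - {path_edge i}" "a \<in> - far_side j" "b \<notin> - far_side j"
      and va: "joined {e \<in> E - {path_edge i}. e \<subseteq> - far_side j} v a"
      using joined_exit[OF vy, of "- far_side j"] end_in_far_side[OF jk] by auto
    have "a = p ! j" using far_side_boundary_edge[of a b j] ab by auto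
    \<comment> \<open>Then v reaches x without the i-th path edge, but x is not on the far side of i.\<close>
    have "joined (E - {path_edge i}) v (p ! j)"
      using joined_mono[OF _ va] \<open>a = p ! j\<close> by blast
    moreover have "joined (E - {path_edge i}) (p ! 0) (p ! j)"
      using assms ik by (intro joined_along_path) auto
    ultimately have "joined (E - {path_edge i}) x y"
      using vy path_start by (meson joined_sym joined_trans)
    with ik path_vertex_in_V[of 0] path_start have "x \<in> far_side i"
      by (simp add: in_far_side_iff)
    with start_notin_far_side show False by blast
  qed
qed

lemma avoiding_mono: "j \<le> i \<Longrightarrow> i \<le> k \<Longrightarrow> avoiding j \<subseteq> avoiding i"
  using far_side_antimono unfolding avoiding_def touches_def by blast

lemma avoiding_end: "avoiding k = UNIV"
  by (simp add: avoiding_def far_side_empty_if touches_def)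

lemma flip_far_subset: "X \<subseteq> BE \<Longrightarrow> flip_far i X \<subseteq> BE"
  by (auto simp: flip_far_def flip_edge_over_bb_edges)

lemma flip_far_flip_far [simp]: "flip_far i (flip_far i X) = X"
  by (simp add: flip_far_def image_image)

lemma config_weight_flip_far: "X \<subseteq> BE \<Longrightarrow> config_weight BE \<mu> (flip_far i X) = config_weight BE \<mu> X"
  unfolding flip_far_def
  using bij_betw_flip_edge_over symmetric_bb_weight_flip_edge_over[OF symmetric]
  by (rule config_weight_image)

lemma flip_far_Int_avoiding:
  assumes "far_side i \<subseteq> far_side j"
  shows "flip_far i X \<inter> avoiding j = X \<inter> avoiding j"
proof -
  have fixed: "flip_edge_over (far_side i) e = e" if "e \<in> avoiding j" for e
    using that assms by (auto simp: avoiding_def flip_edge_over_def touches_def)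
  have "flip_edge_over (far_side i) e \<in> avoiding j \<longleftrightarrow> e \<in> avoiding j" for e
    by (simp add: avoiding_def)
  with fixed show ?thesis
    unfolding flip_far_def by (auto simp: image_iff)
qed

lemma switch_flip_far_self: "switch i (flip_far i X) \<longleftrightarrow> switch i X"
  by (simp add: switch_def flip_far_Int_avoiding)

text \<open>Flipping the far side of a switch i maps connections that use only edges of an
  invariant class N containing avoiding i to connections of the flipped vertices: an edge
  crossing into the far side is replaced by its flip, and the level change at p ! i is
  repaired by the switch.\<close>

lemma joined_flip_far:
  assumes X: "X \<subseteq> BE" and switch: "switch i X"
    and N: "\<And>e. flip_edge_over (far_side i) e \<in> N \<longleftrightarrow> e \<in> N" "avoiding i \<subseteq> N"
    and uv: "joined (X \<inter> N) u v"
  shows "joined (flip_far i X \<inter> N) (flip_over (far_side i) u) (flip_over (far_side i) v)"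
proof (rule joined_map[OF _ uv])
  let ?W = "far_side i" and ?Y = "flip_far i X \<inter> N"
  have flipped: "flip_edge_over ?W e \<in> ?Y" if "e \<in> X \<inter> N" for e
    using that N(1) by (auto simp: flip_far_def)
  have "flip_far i X \<inter> avoiding i \<subseteq> ?Y" using N(2) by blast
  then have "joined ?Y (p ! i, False) (p ! i, True)"
    using switch_flip_far_self[of i X] switch by (auto simp: switch_def intro: joined_mono)
  then have rung: "joined ?Y (p ! i, s) (p ! i, \<not> s)" for s
    by (cases s) (auto intro: joined_sym)
  have boundary: "joined ?Y (flip_over ?W a) (flip_over ?W b)"
    if ab: "{a, b} \<in> X \<inter> N" "fst a \<notin> ?W" "fst b \<in> ?W" for a b
  proof -
    obtain s where s: "a = (p ! i, s)" "b = (p ! Suc i, s)"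
      using far_side_boundary_bb_edge[of a b i] ab X by blast
    have "flip_edge_over ?W {a, b} = {(p ! i, \<not> s), (p ! Suc i, \<not> s)}"
      using ab s by (simp add: flip_edge_over_def touches_def)
    then have "joined ?Y (p ! i, \<not> s) (p ! Suc i, \<not> s)"
      using flipped[OF ab(1)] by (metis joined_edge)
    then have "joined ?Y (p ! i, s) (p ! Suc i, \<not> s)"
      using rung[of s] by (rule joined_trans[rotated])
    with ab s show ?thesis by (simp add: flip_over_def)
  qed
  fix a b assume ab: "{a, b} \<in> X \<inter> N"
  consider "fst a \<notin> ?W" "fst b \<notin> ?W" | "fst a \<in> ?W" "fst b \<in> ?W"
    | "fst a \<notin> ?W" "fst b \<in> ?W" | "fst a \<in> ?W" "fst b \<notin> ?W" by blast
  then show "joined ?Y (flip_over ?W a) (flip_over ?W b)"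
  proof cases
    case 1
    then have "flip_edge_over ?W {a, b} = {flip_over ?W a, flip_over ?W b}"
      by (simp add: flip_edge_over_def flip_over_def touches_def)
    then show ?thesis using flipped[OF ab] by (metis joined_edge)
  next
    case 2
    then have "flip_edge_over ?W {a, b} = {flip_over ?W a, flip_over ?W b}"
      by (simp add: flip_edge_over_def flip_over_def touches_def)
    then show ?thesis using flipped[OF ab] by (metis joined_edge)
  next
    case 3
    then show ?thesis using boundary ab by blast
  next
    case 4
    then show ?thesis using boundary[of b a] ab by (simp add: insert_commute joined_sym)
  qed
qed

lemma switch_flip_far:
  assumes X: "X \<subseteq> BE" and ik: "i \<le> k" and switch: "switch i X" and jk: "j \<le> k"
  shows "switch j (flip_far i X) \<longleftrightarrow> switch j X"
proof (cases "j \<le> i")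
  case True
  then show ?thesis
    using far_side_antimono ik by (simp add: switch_def flip_far_Int_avoiding)
next
  case False
  have preserves: "switch j (flip_far i Z)"
    if Z: "Z \<subseteq> BE" "switch i Z" "switch j Z" for Z
  proof -
    have "joined (flip_far i Z \<inter> avoiding j)
        (flip_over (far_side i) (p ! j, False)) (flip_over (far_side i) (p ! j, True))"
      using Z False jk avoiding_mono[of i j]
      by (intro joined_flip_far) (auto simp: switch_def avoiding_def)
    then show ?thesis
      by (cases "p ! j \<in> far_side i") (auto simp: flip_over_def switch_def intro: joined_sym)
  qed
  show ?thesis
  proof
    assume "switch j (flip_far i X)"
    with preserves[of "flip_far i X"] X switch show "switch j X"
      by (simp add: flip_far_subset switch_flip_far_self)
  qed (rule preserves[OF X switch])
qed

lemma switches_flip_far: "X \<subseteq> BE \<Longrightarrow> i \<in> switches X \<Longrightarrow> switches (flip_far i X) = switches X"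
  using switch_flip_far by (auto simp: switches_def)

lemma bunkbed_flip_eq:
  assumes "switches X \<noteq> {}"
  obtains i where "i \<in> switches X" "bunkbed_flip X = flip_far i X"
  using assms by (metis bunkbed_flip_def ex_in_conv someI_ex)

lemma bunkbed_flip_subset: "X \<subseteq> BE \<Longrightarrow> bunkbed_flip X \<subseteq> BE"
  by (simp add: bunkbed_flip_def flip_far_subset)

lemma config_weight_bunkbed_flip:
  "X \<subseteq> BE \<Longrightarrow> config_weight BE \<mu> (bunkbed_flip X) = config_weight BE \<mu> X"
  by (simp add: bunkbed_flip_def config_weight_flip_far)

lemma bunkbed_flip_bunkbed_flip: "X \<subseteq> BE \<Longrightarrow> bunkbed_flip (bunkbed_flip X) = X"
  by (auto simp: bunkbed_flip_def switches_flip_far some_in_eq)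

text \<open>Take the least i for which x^- reaches p_i^+ avoiding the far side of i (i = k qualifies).
  For i > 0 such a connection enters the far side of i - 1 through the (i-1)-th path edge on
  some level; by minimality that level is the lower one, which connects p_i^- to x^- and
  hence to p_i^+.\<close>

lemma switches_nonempty:
  assumes X: "X \<subseteq> BE" and upper: "joined X (x, False) (y, True)"
  shows "switches X \<noteq> {}"
proof -
  define S where "S = {i. i \<le> k \<and> joined (X \<inter> avoiding i) (x, False) (p ! i, True)}"
  have "k \<in> S" using upper by (simp add: S_def avoiding_end path_end)
  define i where "i = (LEAST i. i \<in> S)"
  have "i \<in> S" unfolding i_def by (rule LeastI) fact
  then have ik: "i \<le> k" and to_upper: "joined (X \<inter> avoiding i) (x, False) (p ! i, True)"
    by (auto simp: S_def)
  have to_lower: "joined (X \<inter> avoiding i) (x, False) (p ! i, False)"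
  proof (cases i)
    case 0
    then show ?thesis using path_start by simp
  next
    case (Suc j)
    let ?A = "{q. fst q \<notin> far_side j}"
    have jk: "j < k" using ik Suc by simp
    have "(x, False) \<in> ?A" "(p ! i, True) \<notin> ?A"
      using start_notin_far_side path_vertex_in_far_side[of j i] Suc ik by auto
    then obtain a b where ab: "{a, b} \<in> X \<inter> avoiding i" "a \<in> ?A" "b \<notin> ?A"
      and to_a: "joined {e \<in> X \<inter> avoiding i. e \<subseteq> ?A} (x, False) a"
      by (rule joined_exit[OF to_upper])
    obtain s where s: "a = (p ! j, s)" "b = (p ! i, s)"
      using far_side_boundary_bb_edge[of a b j] ab X Suc by auto
    have "{e \<in> X \<inter> avoiding i. e \<subseteq> ?A} \<subseteq> X \<inter> avoiding j"
      by (auto simp: avoiding_def touches_def)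
    then have to_a': "joined (X \<inter> avoiding j) (x, False) a"
      using to_a by (rule joined_mono)
    have "\<not> s"
    proof
      assume s
      with to_a' s jk have "j \<in> S" by (simp add: S_def)
      moreover have "j < i" using Suc by simp
      then have "j \<notin> S" unfolding i_def by (rule not_less_Least)
      ultimately show False by contradiction
    qed
    have "X \<inter> avoiding j \<subseteq> X \<inter> avoiding i" using avoiding_mono[of j i] ik Suc by auto
    then have "joined (X \<inter> avoiding i) (x, False) a" using to_a' by (rule joined_mono)
    moreover have "joined (X \<inter> avoiding i) a b" using ab(1) by (rule joined_edge)
    ultimately have "joined (X \<inter> avoiding i) (x, False) b" by (rule joined_trans)
    with s \<open>\<not> s\<close> show ?thesis by simp
  qed
  have "switch i X"
    using to_lower to_upper unfolding switch_def by (meson joined_sym joined_trans)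
  with ik show ?thesis by (auto simp: switches_def)
qed

lemma joined_lower_bunkbed_flip:
  assumes X: "X \<subseteq> BE" and upper: "joined X (x, False) (y, True)"
  shows "joined (bunkbed_flip X) (x, False) (y, False)"
proof -
  obtain i where i: "i \<in> switches X" and flip: "bunkbed_flip X = flip_far i X"
    using bunkbed_flip_eq switches_nonempty[OF X upper] by blast
  then have ik: "i \<le> k" and switch: "switch i X" by (auto simp: switches_def)
  have "joined (flip_far i X \<inter> UNIV)
      (flip_over (far_side i) (x, False)) (flip_over (far_side i) (y, True))"
    using X switch upper by (intro joined_flip_far) auto
  then have to_flipped_y: "joined (flip_far i X) (x, False) (flip_over (far_side i) (y, True))"
    using start_notin_far_side by (simp add: flip_over_def)
  show ?thesis
  proof (cases "i < k")
    case True
    with to_flipped_y flip show ?thesis by (simp add: flip_over_def end_in_far_side)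
  next
    case False
    \<comment> \<open>Here the far side is empty and the switch at p ! k = y survives the flip.\<close>
    with ik have "i = k" by simp
    moreover have "switch i (flip_far i X)" using switch by (simp add: switch_flip_far_self)
    ultimately have "joined (flip_far i X) (y, False) (y, True)"
      by (simp add: switch_def avoiding_end path_end)
    with False to_flipped_y flip show ?thesis
      by (simp add: flip_over_def far_side_empty_if) (meson joined_sym joined_trans)
  qed
qed

theorem bunkbed_inequality:
  "perc_prob BE \<mu> (\<lambda>X. joined X (x, False) (y, True))
     \<le> perc_prob BE \<mu> (\<lambda>X. joined X (x, False) (y, False))"
  using bb_edges_finite[OF simple_graph] weight
  by (rule perc_prob_le_by_involution[where \<phi> = bunkbed_flip])
    (simp_all add: bunkbed_flip_subset bunkbed_flip_bunkbed_flip config_weight_bunkbed_flip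
      joined_lower_bunkbed_flip)

end

theorem corollary3p7:
  fixes V :: "'a set" and E :: "'a set set" and \<mu> :: "('a \<times> bool) set \<Rightarrow> real"
  assumes "forest V E"
    and "weight (bb_edges V E) \<mu>"
    and "symmetric_bb_weight E \<mu>"
    and "x \<in> V" and "y \<in> V"
  shows "perc_prob (bb_edges V E) \<mu> (\<lambda>X. joined X (x, False) (y, False))
         \<ge> perc_prob (bb_edges V E) \<mu> (\<lambda>X. joined X (x, False) (y, True))"
proof (cases "joined E x y")
  case True
  then obtain p where p: "p \<noteq> []" "hd p = x" "last p = y" "distinct p"
    "successively (\<lambda>u v. {u, v} \<in> E) p"
    unfolding joined_def by (auto elim: rtrancl_imp_distinct_path)
  then interpret bunkbed_forest_path V E \<mu> x y p "length p - 1"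
    using assms by unfold_locales
      (auto simp: hd_conv_nth last_conv_nth intro: successively_nth)
  show ?thesis by (rule bunkbed_inequality)
next
  case False
  then have "\<not> joined X (x, False) (y, True)" if "X \<subseteq> bb_edges V E" for X
    using joined_bb_imp_joined[OF that] by fastforce
  with assms(1,2) show ?thesis
    by (intro perc_prob_le_by_involution[where \<phi> = id])
      (auto simp: forest_def bb_edges_finite)
qed

end
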